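(* Let $R_1,R_2$ be nonaxisymmetric rigid components in $\mathbb{R}^3$ in generic position ($n_r^1,n_r^2>1$), and let $R_3$ be a rod ($n_r^3=1$) distinct from them. Suppose that $R_1$ and $R_2$ intersect in at least two instances, and let $\mathbf p_1,\mathbf p_2$ be points lying in two distinct instances of $R_1\cap R_2$. Suppose also that each of $R_1$ and $R_2$ intersects $R_3$ in exactly one instance, and let $\mathbf p_3\in R_1\cap R_3$ and $\mathbf p_4\in R_2\cap R_3$. Assume that neither $\mathbf p_3$ nor $\mathbf p_4$ is collinear with both $\mathbf p_1$ and $\mathbf p_2$. Then the composite body $R_1\cup R_2\cup R_3$ is rigid.
   Context: A rod is a straight segment in $\mathbb{R}^3$. A rigid component (rigid body) $R_i$ is a set of rods that moves as a single rigid body; $n_r^i$ denotes the number of rods it contains, and a component with $n_r^i=1$ is a rod. A component with $n_r^i>1$ is called nonaxisymmetric and may be planar or nonplanar. The intersection of two distinct components consists of finitely many connected pieces, called instances (contacts). Distinct components share no rod. Positions are generic apart from the stated incidences. A union of components is rigid if it is infinitesimally rigid in the following sense. An infinitesimal motion is admissible if its restriction to each component preserves, to first order, all distances between points of that component, and if points on a common rod remain collinear to first order. The union is rigid if every admissible infinitesimal motion is a Euclidean rigid motion of the whole union. Equivalently, the composite rigidity matrix has a right nullspace of dimension $6$. *)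

theory Defs
  imports "HOL-Analysis.Analysis" "HOL-Analysis.Cross3"
begin

type_synonym point = "real^3"

type_synonym rod = "point \<times> point"

definition is_rod :: "rod \<Rightarrow> bool" where
  "is_rod r \<longleftrightarrow> fst r \<noteq> snd r"

definition rod_points :: "rod \<Rightarrow> point set" where
  "rod_points r = closed_segment (fst r) (snd r)"

definition component :: "rod set \<Rightarrow> bool" where
  "component C \<longleftrightarrow> finite C \<and> C \<noteq> {} \<and> (\<forall>r\<in>C. is_rod r)"

definition comp_points :: "rod set \<Rightarrow> point set" where
  "comp_points C = (\<Union>r\<in>C. rod_points r)"

definition instances :: "rod set \<Rightarrow> rod set \<Rightarrow> point set set" where
  "instances A B =
     (let S = comp_points A \<inter> comp_points B in connected_component_set S ` S)"

definition inf_euclidean :: "(point \<Rightarrow> point) \<Rightarrow> bool" where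
  "inf_euclidean v \<longleftrightarrow> (\<exists>\<omega> t. \<forall>x. v x = cross3 \<omega> x + t)"

definition admissible_motion :: "rod set set \<Rightarrow> (point \<Rightarrow> point) \<Rightarrow> bool" where
  "admissible_motion Cs v \<longleftrightarrow>
     (\<forall>C\<in>Cs. \<exists>u. inf_euclidean u \<and> (\<forall>x\<in>comp_points C. v x = u x))"

definition rigid_union :: "rod set set \<Rightarrow> bool" where
  "rigid_union Cs \<longleftrightarrow>
     (\<forall>v. admissible_motion Cs v \<longrightarrow>
        (\<exists>u. inf_euclidean u \<and> (\<forall>x\<in>(\<Union>C\<in>Cs. comp_points C). v x = u x)))"

end

theory Submission
  imports Defs
begin

unbundle cross3_syntax

text \<open>The relative motion \<open>u\<^sub>2 - u\<^sub>1\<close> of the two nonaxisymmetric bodies fixes the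
  two contact points \<open>p\<^sub>1, p\<^sub>2\<close>, so it is a rotation about the line \<open>p\<^sub>1p\<^sub>2\<close>; in particular it
  moves \<open>p\<^sub>4\<close> along the normal of the plane \<open>p\<^sub>1p\<^sub>2p\<^sub>4\<close>. The rod, relative to \<open>R\<^sub>1\<close>, turns about
  \<open>p\<^sub>3\<close>, so it can move \<open>p\<^sub>4\<close> only perpendicularly to \<open>p\<^sub>4 - p\<^sub>3\<close>. Since \<open>p\<^sub>3\<close> is off that plane,
  these two directions are incompatible unless the rotation is trivial; then the rod, fixed at
  \<open>p\<^sub>3\<close> and \<open>p\<^sub>4\<close> relative to \<open>R\<^sub>1\<close>, can only spin about its own axis, which moves none of its
  points.\<close>

lemma cross3_expansion:
  fixes a b c :: "real^3"
  shows "((a \<times> b) \<bullet> (a \<times> b)) *\<^sub>R c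
    = ((c \<times> b) \<bullet> (a \<times> b)) *\<^sub>R a + ((a \<times> c) \<bullet> (a \<times> b)) *\<^sub>R b + (c \<bullet> (a \<times> b)) *\<^sub>R (a \<times> b)"
  unfolding vec_eq_iff forall_3 cross3_def inner_vec_def sum_3
  by (simp add: vector_def algebra_simps)

lemma coplanar_insert_if_collinear:
  assumes "collinear S"
  shows "coplanar (insert d S)"
proof -
  obtain u v where "S \<subseteq> affine hull {u, v}"
    using assms collinear_affine_hull by blast
  moreover have "affine hull {u, v} \<subseteq> affine hull {u, v, d}"
    by (rule hull_mono) blast
  moreover have "d \<in> affine hull {u, v, d}"
    by (rule hull_inc) blast
  ultimately have "insert d S \<subseteq> affine hull {u, v, d}"
    by blast
  then show ?thesis
    unfolding coplanar_def by blast
qed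

lemma coplanar_if_cross_inner_eq_0:
  fixes a b c d :: "real^3"
  assumes "((b - a) \<times> (c - a)) \<bullet> (d - a) = 0"
  shows "coplanar {a, b, c, d}"
proof (cases "(b - a) \<times> (c - a) = 0")
  case True
  then have "collinear {b, a, c}"
    by (simp add: cross_eq_0 collinear_3)
  then have "collinear {a, b, c}"
    by (simp add: insert_commute)
  then have "coplanar (insert d {a, b, c})"
    by (rule coplanar_insert_if_collinear)
  then show ?thesis
    by (simp add: insert_commute)
next
  case False
  define n where "n = (b - a) \<times> (c - a)"
  have nn: "n \<bullet> n \<noteq> 0"
    using False by (simp add: n_def)
  define \<alpha> where "\<alpha> = (((d - a) \<times> (c - a)) \<bullet> n) / (n \<bullet> n)"
  define \<beta> where "\<beta> = (((b - a) \<times> (d - a)) \<bullet> n) / (n \<bullet> n)"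
  have "(n \<bullet> n) *\<^sub>R (d - a) = (n \<bullet> n) *\<^sub>R (\<alpha> *\<^sub>R (b - a) + \<beta> *\<^sub>R (c - a))"
    using cross3_expansion[of "b - a" "c - a" "d - a"] assms nn
    unfolding n_def[symmetric] \<alpha>_def \<beta>_def by (simp add: inner_commute scaleR_add_right)
  then have "d - a = \<alpha> *\<^sub>R (b - a) + \<beta> *\<^sub>R (c - a)"
    using nn by simp
  then have "d = (1 - \<alpha> - \<beta>) *\<^sub>R a + \<alpha> *\<^sub>R b + \<beta> *\<^sub>R c"
    by (simp add: algebra_simps)
  then have "d \<in> affine hull {a, b, c}"
    unfolding affine_hull_3 mem_Collect_eq
    by (intro exI[of _ "1 - \<alpha> - \<beta>"] exI[of _ \<alpha>] exI[of _ \<beta>]) simp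
  then have "{a, b, c, d} \<subseteq> affine hull {a, b, c}"
    using hull_subset[of "{a, b, c}" affine] by auto
  then show ?thesis
    unfolding coplanar_def by blast
qed

lemma inf_euclidean_diff:
  assumes "inf_euclidean u" "inf_euclidean v"
  shows "inf_euclidean (\<lambda>x. u x - v x)"
proof -
  obtain \<omega> t \<omega>' t' where "\<And>x. u x = \<omega> \<times> x + t" "\<And>x. v x = \<omega>' \<times> x + t'"
    using assms unfolding inf_euclidean_def by metis
  then have "\<forall>x. u x - v x = (\<omega> - \<omega>') \<times> x + (t - t')"
    by (simp add: Cross3.left_diff_distrib)
  then show ?thesis
    unfolding inf_euclidean_def by blast
qed

lemma inf_euclidean_fixing_point:
  assumes "inf_euclidean u" "u p = 0"
  obtains \<omega> where "\<And>x. u x = \<omega> \<times> (x - p)"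
proof -
  obtain \<omega> t where u: "\<And>x. u x = \<omega> \<times> x + t"
    using assms(1) unfolding inf_euclidean_def by blast
  then have "t = - (\<omega> \<times> p)"
    using assms(2) by (simp add: add_eq_0_iff)
  then show ?thesis
    using that u by (simp add: Cross3.right_diff_distrib)
qed

lemma inf_euclidean_fixing_point_orthogonal:
  assumes "inf_euclidean u" "u p = 0"
  shows "u x \<bullet> (x - p) = 0"
proof -
  obtain \<omega> where "\<And>x. u x = \<omega> \<times> (x - p)"
    using inf_euclidean_fixing_point[OF assms] by blast
  then show ?thesis
    by (simp add: dot_cross_self)
qed

lemma inf_euclidean_fixing_two_points:
  assumes "inf_euclidean u" "u p = 0" "u q = 0" "p \<noteq> q"
  obtains k where "\<And>x. u x = k *\<^sub>R ((q - p) \<times> (x - p))"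
proof -
  obtain \<omega> where u: "\<And>x. u x = \<omega> \<times> (x - p)"
    using inf_euclidean_fixing_point[OF assms(1,2)] by blast
  have "collinear {0, q - p, \<omega>}"
    using assms(3) u[of q] cross_eq_0[of \<omega> "q - p"] by (simp add: insert_commute)
  then obtain k where "\<omega> = k *\<^sub>R (q - p)"
    using assms(4) collinear_lemma[of "q - p" \<omega>] by auto
  then show ?thesis
    by (intro that[of k]) (simp add: u cross_mult_left)
qed

lemma inf_euclidean_fixing_line:
  assumes "inf_euclidean u" "u p = 0" "u q = 0" "p \<noteq> q" "collinear {p, q, x}"
  shows "u x = 0"
proof -
  obtain k where u: "\<And>y. u y = k *\<^sub>R ((q - p) \<times> (y - p))"
    using inf_euclidean_fixing_two_points[OF assms(1-4)] by blast
  obtain s where "x = s *\<^sub>R p + (1 - s) *\<^sub>R q"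
    using assms(4,5) collinear_3_expand[of p x q] by (auto simp: insert_commute)
  then have "x - p = (1 - s) *\<^sub>R (q - p)"
    by (simp add: algebra_simps)
  then show ?thesis
    by (simp add: u cross_mult_right)
qed

lemma inf_euclidean_hinged_bodies:
  assumes euc: "inf_euclidean u\<^sub>1" "inf_euclidean u\<^sub>2" "inf_euclidean u\<^sub>3"
    and contacts: "u\<^sub>1 p\<^sub>1 = u\<^sub>2 p\<^sub>1" "u\<^sub>1 p\<^sub>2 = u\<^sub>2 p\<^sub>2" "u\<^sub>1 p\<^sub>3 = u\<^sub>3 p\<^sub>3" "u\<^sub>2 p\<^sub>4 = u\<^sub>3 p\<^sub>4"
    and generic: "\<not> coplanar {p\<^sub>1, p\<^sub>2, p\<^sub>3, p\<^sub>4}"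
  shows "u\<^sub>2 = u\<^sub>1" and "collinear {p\<^sub>3, p\<^sub>4, x} \<Longrightarrow> u\<^sub>3 x = u\<^sub>1 x"
proof -
  define d where "d x = u\<^sub>2 x - u\<^sub>1 x" for x
  define e where "e x = u\<^sub>3 x - u\<^sub>1 x" for x
  have d: "inf_euclidean d" and e: "inf_euclidean e"
    unfolding d_def e_def using euc by (simp_all add: inf_euclidean_diff)
  have "p\<^sub>1 \<noteq> p\<^sub>2" "p\<^sub>3 \<noteq> p\<^sub>4"
    using generic coplanar_3[of p\<^sub>2 p\<^sub>3 p\<^sub>4] coplanar_3[of p\<^sub>1 p\<^sub>2 p\<^sub>4] by auto
  moreover have "d p\<^sub>1 = 0" "d p\<^sub>2 = 0" "e p\<^sub>3 = 0"
    using contacts by (simp_all add: d_def e_def)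
  ultimately obtain k where dk: "\<And>x. d x = k *\<^sub>R ((p\<^sub>2 - p\<^sub>1) \<times> (x - p\<^sub>1))"
    using inf_euclidean_fixing_two_points[OF d] by blast
  have "e p\<^sub>4 = d p\<^sub>4"
    using contacts by (simp add: d_def e_def)
  then have "k * (((p\<^sub>2 - p\<^sub>1) \<times> (p\<^sub>4 - p\<^sub>1)) \<bullet> (p\<^sub>4 - p\<^sub>3)) = 0"
    using inf_euclidean_fixing_point_orthogonal[OF e \<open>e p\<^sub>3 = 0\<close>, of p\<^sub>4] by (simp add: dk)
  moreover have "((p\<^sub>2 - p\<^sub>1) \<times> (p\<^sub>4 - p\<^sub>1)) \<bullet> (p\<^sub>4 - p\<^sub>3) = - (((p\<^sub>2 - p\<^sub>1) \<times> (p\<^sub>4 - p\<^sub>1)) \<bullet> (p\<^sub>3 - p\<^sub>1))"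
  proof -
    have "p\<^sub>4 - p\<^sub>3 = (p\<^sub>4 - p\<^sub>1) - (p\<^sub>3 - p\<^sub>1)"
      by simp
    then show ?thesis
      by (simp only: inner_diff_right[of _ "p\<^sub>4 - p\<^sub>1"] dot_cross_self(3) diff_0)
  qed
  moreover have "((p\<^sub>2 - p\<^sub>1) \<times> (p\<^sub>4 - p\<^sub>1)) \<bullet> (p\<^sub>3 - p\<^sub>1) \<noteq> 0"
    using generic coplanar_if_cross_inner_eq_0[of p\<^sub>2 p\<^sub>1 p\<^sub>4 p\<^sub>3] by (auto simp: insert_commute)
  ultimately have "k = 0"
    by simp
  then have d0: "d = (\<lambda>_. 0)"
    by (simp add: dk fun_eq_iff)
  then show "u\<^sub>2 = u\<^sub>1"
    by (simp add: d_def fun_eq_iff)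
  assume "collinear {p\<^sub>3, p\<^sub>4, x}"
  then have "e x = 0"
    using inf_euclidean_fixing_line[OF e \<open>e p\<^sub>3 = 0\<close>] \<open>p\<^sub>3 \<noteq> p\<^sub>4\<close> \<open>e p\<^sub>4 = d p\<^sub>4\<close> d0
    by simp
  then show "u\<^sub>3 x = u\<^sub>1 x"
    by (simp add: e_def)
qed

lemma instances_subset: "I \<in> instances A B \<Longrightarrow> I \<subseteq> comp_points A \<inter> comp_points B"
  unfolding instances_def Let_def using connected_component_subset by blast

lemma collinear_comp_points_if_card_1: "card R = 1 \<Longrightarrow> collinear (comp_points R)"
  by (auto simp: card_1_singleton_iff comp_points_def rod_points_def collinear_closed_segment)

text \<open>Only the four contacts and the noncoplanarity of their points are used; the
  noncollinearity hypotheses are implied by noncoplanarity.\<close>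

theorem mainTheorem2:
  fixes R1 R2 R3 :: "rod set" and p1 p2 p3 p4 :: point
  assumes comps: "component R1" "component R2" "component R3"
    and nonaxi: "card R1 > 1" "card R2 > 1"
    and isrod: "card R3 = 1"
    and share_no_rod: "R1 \<inter> R2 = {}" "R1 \<inter> R3 = {}" "R2 \<inter> R3 = {}"
    and two_inst: "I1 \<in> instances R1 R2" "I2 \<in> instances R1 R2" "I1 \<noteq> I2"
    and p1: "p1 \<in> I1" and p2: "p2 \<in> I2"
    and one13: "card (instances R1 R3) = 1"
    and one23: "card (instances R2 R3) = 1"
    and p3: "p3 \<in> comp_points R1 \<inter> comp_points R3"
    and p4: "p4 \<in> comp_points R2 \<inter> comp_points R3"
    and ncol3: "\<not> collinear {p1, p2, p3}"
    and ncol4: "\<not> collinear {p1, p2, p4}"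
    and generic: "\<not> coplanar {p1, p2, p3, p4}"
  shows "rigid_union {R1, R2, R3}"
  unfolding rigid_union_def
proof (intro allI impI)
  fix v assume "admissible_motion {R1, R2, R3} v"
  then obtain u1 u2 u3 where euc: "inf_euclidean u1" "inf_euclidean u2" "inf_euclidean u3"
    and v: "\<forall>x\<in>comp_points R1. v x = u1 x" "\<forall>x\<in>comp_points R2. v x = u2 x"
      "\<forall>x\<in>comp_points R3. v x = u3 x"
    unfolding admissible_motion_def by auto
  have "p1 \<in> comp_points R1 \<inter> comp_points R2" "p2 \<in> comp_points R1 \<inter> comp_points R2"
    using instances_subset[OF two_inst(1)] instances_subset[OF two_inst(2)] p1 p2 by auto
  then have "u1 p1 = u2 p1" "u1 p2 = u2 p2" "u1 p3 = u3 p3" "u2 p4 = u3 p4"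
    using v p3 p4 by auto
  note hinged = inf_euclidean_hinged_bodies[OF euc this generic]
  have "collinear {p3, p4, x}" if "x \<in> comp_points R3" for x
    by (rule collinear_subset[OF collinear_comp_points_if_card_1[OF isrod]]) (use that p3 p4 in auto)
  then have "\<forall>x\<in>\<Union>C\<in>{R1, R2, R3}. comp_points C. v x = u1 x"
    using v hinged by auto
  with euc show "\<exists>u. inf_euclidean u \<and> (\<forall>x\<in>\<Union>C\<in>{R1, R2, R3}. comp_points C. v x = u x)"
    by blast
qed

end
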